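(* Let $A$ be an event and $X,Y$ random variables with discrete distributions such that $X=P(A\mid X)$ and $Y=P(A\mid Y)$. Fix $0<\delta<\tfrac12$, and suppose that for each possible value $(x,y)$ of $(X,Y)$ (i.e. $P(X=x,Y=y)>0$) with $|y-x|\ge1-\delta$ there is no other such possible value $(x',y')$ with $|y'-x'|\ge 1-\delta$ and either $x'=x$ or $y'=y$. Then $$P(|Y-X|\ge1-\delta)\le\frac{2\delta}{1+\delta}.$$ *)

theory Defs
  imports "HOL-Probability.Probability"
begin

definition discrete_rv :: "'a measure \<Rightarrow> ('a \<Rightarrow> real) \<Rightarrow> bool" where
  "discrete_rv M X \<longleftrightarrow> (\<exists>S. countable S \<and> (AE \<omega> in M. X \<omega> \<in> S))"

text \<open>For discretely distributed X, the statement X = P(A | X) means that on every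
  atom {X = x} of positive probability, P(A | X = x) = x (elementary conditional
  probability, library notion cond_prob).\<close>
definition self_calibrated :: "'a measure \<Rightarrow> 'a set \<Rightarrow> ('a \<Rightarrow> real) \<Rightarrow> bool" where
  "self_calibrated M A X \<longleftrightarrow>
     (\<forall>x. measure M {\<omega> \<in> space M. X \<omega> = x} > 0 \<longrightarrow>
          cond_prob M (\<lambda>\<omega>. \<omega> \<in> A) (\<lambda>\<omega>. X \<omega> = x) = x)"

end

theory Submission
  imports Defs
begin

text \<open>
  Call a value (x, y) of (X, Y) far if its atom has positive probability and
  |y - x| >= 1 - \<delta>. Let p be the mass of a far atom, r = P(X = x, Y \<noteq> y) and
  s = P(Y = y, X \<noteq> x). If, say, y - x >= 1 - \<delta>, calibration gives
  y (p + s) = P(A, Y = y) <= P(A, X = x) + s = x (p + r) + s, and since 0 <= x, y <= 1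
  the gap y - x can only be paid for by the off-atom masses: (1 - \<delta>) p <= \<delta> (r + s).
  By hypothesis distinct far atoms lie in distinct rows and in distinct columns, so the
  row remainders {X = x, Y \<noteq> y} of the far atoms are pairwise disjoint and miss the
  far event, and likewise the column remainders. Summing over the countably many far
  atoms gives (1 - \<delta>) P(far) <= 2 \<delta> (1 - P(far)).
\<close>

lemma calibration_gap_bound:
  fixes p r s x y \<delta> :: real
  assumes "0 \<le> p" "0 \<le> r" "0 \<le> s" "0 \<le> x" "y \<le> 1"
    and gap: "1 - \<delta> \<le> y - x"
    and mass: "y * (p + s) \<le> x * (p + r) + s"
  shows "(1 - \<delta>) * p \<le> \<delta> * (r + s)"
proof -
  have "x * s \<ge> 0" "x * r \<le> \<delta> * r"
    using assms by (auto intro: mult_right_mono)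
  then have row: "x * (r - s) \<le> \<delta> * r"
    by (simp add: right_diff_distrib)
  have "(1 - \<delta>) * (p + s) \<le> (y - x) * (p + s)"
    using assms by (intro mult_right_mono) auto
  also have "\<dots> \<le> x * (r - s) + s"
    using mass by (simp add: algebra_simps)
  finally show ?thesis
    using row by (simp add: algebra_simps)
qed

lemma (in prob_space) self_calibrated_atom:
  assumes "self_calibrated M A X" and pos: "0 < prob {\<omega> \<in> space M. X \<omega> = x}"
  shows "prob {\<omega> \<in> space M. \<omega> \<in> A \<and> X \<omega> = x} = x * prob {\<omega> \<in> space M. X \<omega> = x}"
    and "0 \<le> x" "x \<le> 1"
proof -
  have "prob {\<omega> \<in> space M. \<omega> \<in> A \<and> X \<omega> = x} / prob {\<omega> \<in> space M. X \<omega> = x} = x"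
    using assms unfolding self_calibrated_def cond_prob_def by auto
  then show eq: "prob {\<omega> \<in> space M. \<omega> \<in> A \<and> X \<omega> = x} = x * prob {\<omega> \<in> space M. X \<omega> = x}"
    using pos by (simp add: field_simps)
  have "{\<omega> \<in> space M. X \<omega> = x} \<in> sets M"
    using pos measure_notin_sets by fastforce
  then have "prob {\<omega> \<in> space M. \<omega> \<in> A \<and> X \<omega> = x} \<le> prob {\<omega> \<in> space M. X \<omega> = x}"
    by (intro finite_measure_mono) auto
  moreover have "0 \<le> prob {\<omega> \<in> space M. \<omega> \<in> A \<and> X \<omega> = x}"
    by simp
  ultimately show "0 \<le> x" "x \<le> 1"
    using eq pos by (auto simp: zero_le_mult_iff)
qed

lemma (in prob_space) calibrated_atom_bound:
  assumes [measurable]: "A \<in> sets M" "X \<in> borel_measurable M" "Y \<in> borel_measurable M"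
    and cal: "self_calibrated M A X" "self_calibrated M A Y"
    and pos: "0 < prob {\<omega> \<in> space M. X \<omega> = x \<and> Y \<omega> = y}"
    and gap: "1 - \<delta> \<le> y - x"
  shows "(1 - \<delta>) * prob {\<omega> \<in> space M. X \<omega> = x \<and> Y \<omega> = y}
    \<le> \<delta> * (prob {\<omega> \<in> space M. X \<omega> = x \<and> Y \<omega> \<noteq> y} + prob {\<omega> \<in> space M. Y \<omega> = y \<and> X \<omega> \<noteq> x})"
proof -
  let ?p = "prob {\<omega> \<in> space M. X \<omega> = x \<and> Y \<omega> = y}"
  let ?r = "prob {\<omega> \<in> space M. X \<omega> = x \<and> Y \<omega> \<noteq> y}"
  let ?s = "prob {\<omega> \<in> space M. Y \<omega> = y \<and> X \<omega> \<noteq> x}"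
  have row: "prob {\<omega> \<in> space M. X \<omega> = x} = ?p + ?r"
    by (subst finite_measure_Union[symmetric]) (auto intro!: arg_cong[where f = prob])
  have col: "prob {\<omega> \<in> space M. Y \<omega> = y} = ?p + ?s"
    by (subst finite_measure_Union[symmetric]) (auto intro!: arg_cong[where f = prob])
  have pos_row: "0 < prob {\<omega> \<in> space M. X \<omega> = x}" and pos_col: "0 < prob {\<omega> \<in> space M. Y \<omega> = y}"
    using pos row col by (simp_all add: add_pos_nonneg)
  have "y * (?p + ?s) = prob {\<omega> \<in> space M. \<omega> \<in> A \<and> Y \<omega> = y}"
    using self_calibrated_atom(1)[OF cal(2) pos_col] col by simp
  also have "\<dots> \<le> prob ({\<omega> \<in> space M. \<omega> \<in> A \<and> X \<omega> = x} \<union> {\<omega> \<in> space M. Y \<omega> = y \<and> X \<omega> \<noteq> x})"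
    by (intro finite_measure_mono) auto
  also have "\<dots> \<le> prob {\<omega> \<in> space M. \<omega> \<in> A \<and> X \<omega> = x} + ?s"
    by (intro measure_Un_le) auto
  also have "\<dots> = x * (?p + ?r) + ?s"
    using self_calibrated_atom(1)[OF cal(1) pos_row] row by simp
  finally show ?thesis
    using self_calibrated_atom(2,3) cal pos_row pos_col gap
    by (intro calibration_gap_bound[where y = y]) auto
qed

lemma (in prob_space) calibrated_atom_bound_abs:
  assumes [measurable]: "A \<in> sets M" "X \<in> borel_measurable M" "Y \<in> borel_measurable M"
    and cal: "self_calibrated M A X" "self_calibrated M A Y"
    and pos: "0 < prob {\<omega> \<in> space M. X \<omega> = x \<and> Y \<omega> = y}"
    and gap: "1 - \<delta> \<le> \<bar>y - x\<bar>"
  shows "(1 - \<delta>) * prob {\<omega> \<in> space M. X \<omega> = x \<and> Y \<omega> = y}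
    \<le> \<delta> * (prob {\<omega> \<in> space M. X \<omega> = x \<and> Y \<omega> \<noteq> y} + prob {\<omega> \<in> space M. Y \<omega> = y \<and> X \<omega> \<noteq> x})"
proof (cases "1 - \<delta> \<le> y - x")
  case True
  then show ?thesis
    using calibrated_atom_bound[OF assms(1-6)] by blast
next
  case False
  then have "1 - \<delta> \<le> x - y"
    using gap by linarith
  then show ?thesis
    using calibrated_atom_bound[OF assms(1,3,2) cal(2,1), of y x \<delta>] pos
    by (simp add: conj_commute add.commute)
qed

lemma (in finite_measure) measure_disjoint_UN_le:
  fixes E F G :: "'i \<Rightarrow> 'a set"
  assumes I: "countable I"
    and disj: "disjoint_family_on E I" "disjoint_family_on F I" "disjoint_family_on G I"
    and sets: "\<And>i. i \<in> I \<Longrightarrow> E i \<in> sets M" "\<And>i. i \<in> I \<Longrightarrow> F i \<in> sets M"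
      "\<And>i. i \<in> I \<Longrightarrow> G i \<in> sets M"
    and "0 \<le> a" "0 \<le> b"
    and le: "\<And>i. i \<in> I \<Longrightarrow> a * measure M (E i) \<le> b * (measure M (F i) + measure M (G i))"
  shows "a * measure M (\<Union>i\<in>I. E i) \<le> b * (measure M (\<Union>i\<in>I. F i) + measure M (\<Union>i\<in>I. G i))"
proof -
  have UN: "ennreal (measure M (\<Union>i\<in>I. H i)) = (\<integral>\<^sup>+i. ennreal (measure M (H i)) \<partial>count_space I)"
    if "disjoint_family_on H I" "\<And>i. i \<in> I \<Longrightarrow> H i \<in> sets M" for H
    using emeasure_UN_countable[OF that(2) I that(1)] by (simp add: emeasure_eq_measure)
  have "ennreal (a * measure M (\<Union>i\<in>I. E i)) = (\<integral>\<^sup>+i. ennreal (a * measure M (E i)) \<partial>count_space I)"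
    using \<open>0 \<le> a\<close> by (simp add: UN[OF disj(1) sets(1)] ennreal_mult nn_integral_cmult)
  also have "\<dots> \<le> (\<integral>\<^sup>+i. ennreal (b * (measure M (F i) + measure M (G i))) \<partial>count_space I)"
    by (intro nn_integral_mono ennreal_leI le) simp
  also have "\<dots> = ennreal b * ((\<integral>\<^sup>+i. ennreal (measure M (F i)) \<partial>count_space I)
      + (\<integral>\<^sup>+i. ennreal (measure M (G i)) \<partial>count_space I))"
    using \<open>0 \<le> b\<close> by (simp add: ennreal_mult nn_integral_add nn_integral_cmult)
  also have "\<dots> = ennreal (b * (measure M (\<Union>i\<in>I. F i) + measure M (\<Union>i\<in>I. G i)))"
    using \<open>0 \<le> b\<close> by (simp add: UN[OF disj(2) sets(2)] UN[OF disj(3) sets(3)] ennreal_mult)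
  finally show ?thesis
    using \<open>0 \<le> b\<close> by simp
qed

lemma (in prob_space) prob_UN_matched_atoms_le:
  fixes X Y :: "'a \<Rightarrow> real" and K :: "(real \<times> real) set"
  assumes [measurable]: "X \<in> borel_measurable M" "Y \<in> borel_measurable M"
    and "countable K" "inj_on fst K" "inj_on snd K" "0 \<le> a" "0 \<le> b"
    and atom_le: "\<And>x y. (x, y) \<in> K \<Longrightarrow> a * prob {\<omega> \<in> space M. X \<omega> = x \<and> Y \<omega> = y}
      \<le> b * (prob {\<omega> \<in> space M. X \<omega> = x \<and> Y \<omega> \<noteq> y} + prob {\<omega> \<in> space M. Y \<omega> = y \<and> X \<omega> \<noteq> x})"
  defines "E \<equiv> \<Union>(x, y)\<in>K. {\<omega> \<in> space M. X \<omega> = x \<and> Y \<omega> = y}"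
  shows "a * prob E \<le> 2 * b * (1 - prob E)"
proof -
  define atom where "atom k = {\<omega> \<in> space M. X \<omega> = fst k \<and> Y \<omega> = snd k}" for k
  define row where "row k = {\<omega> \<in> space M. X \<omega> = fst k \<and> Y \<omega> \<noteq> snd k}" for k
  define col where "col k = {\<omega> \<in> space M. Y \<omega> = snd k \<and> X \<omega> \<noteq> fst k}" for k
  have E_eq: "E = (\<Union>k\<in>K. atom k)"
    unfolding E_def atom_def by auto
  have [measurable]: "atom k \<in> sets M" "row k \<in> sets M" "col k \<in> sets M" for k
    unfolding atom_def row_def col_def by measurable
  have E_sets: "E \<in> sets M"
    unfolding E_eq using \<open>countable K\<close> by (intro sets.countable_UN'') auto
  have "(\<Union>k\<in>K. row k) \<subseteq> space M - E"
    using \<open>inj_on fst K\<close> unfolding E_eq atom_def row_def inj_on_def by fastforce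
  then have row_le: "prob (\<Union>k\<in>K. row k) \<le> 1 - prob E"
    using E_sets by (simp add: prob_compl[symmetric] finite_measure_mono)
  have "(\<Union>k\<in>K. col k) \<subseteq> space M - E"
    using \<open>inj_on snd K\<close> unfolding E_eq atom_def col_def inj_on_def by fastforce
  then have col_le: "prob (\<Union>k\<in>K. col k) \<le> 1 - prob E"
    using E_sets by (simp add: prob_compl[symmetric] finite_measure_mono)
  have "disjoint_family_on atom K"
    unfolding disjoint_family_on_def atom_def by (auto simp: prod_eq_iff)
  moreover have "disjoint_family_on row K"
    using \<open>inj_on fst K\<close> unfolding disjoint_family_on_def row_def inj_on_def by fastforce
  moreover have "disjoint_family_on col K"
    using \<open>inj_on snd K\<close> unfolding disjoint_family_on_def col_def inj_on_def by fastforce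
  moreover have "a * prob (atom k) \<le> b * (prob (row k) + prob (col k))" if "k \<in> K" for k
    using atom_le[of "fst k" "snd k"] that unfolding atom_def row_def col_def by simp
  ultimately have "a * prob E \<le> b * (prob (\<Union>k\<in>K. row k) + prob (\<Union>k\<in>K. col k))"
    unfolding E_eq using \<open>countable K\<close> \<open>0 \<le> a\<close> \<open>0 \<le> b\<close>
    by (intro measure_disjoint_UN_le) auto
  also have "\<dots> \<le> b * ((1 - prob E) + (1 - prob E))"
    using row_le col_le \<open>0 \<le> b\<close> by (intro mult_left_mono add_mono)
  finally show ?thesis
    by (simp add: algebra_simps)
qed

lemma (in prob_space) countable_pos_prob_values:
  fixes Z :: "'a \<Rightarrow> 'b::t1_space"
  assumes "Z \<in> borel_measurable M"
  shows "countable {z. 0 < prob {\<omega> \<in> space M. Z \<omega> = z}}"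
proof -
  interpret Z: prob_space "distr M borel Z"
    using assms by (rule prob_space_distr)
  have "prob {\<omega> \<in> space M. Z \<omega> = z} = Z.prob {z}" for z
    using assms by (subst measure_distr) (auto intro!: arg_cong[where f = prob])
  then show ?thesis
    using Z.countable_support by (simp add: zero_less_measure_iff)
qed

lemma (in prob_space) prob_le_prob_UN_pos_atoms:
  fixes Z :: "'a \<Rightarrow> 'b::t1_space"
  assumes Z: "Z \<in> borel_measurable M" and "countable S" "AE \<omega> in M. Z \<omega> \<in> S"
  shows "prob {\<omega> \<in> space M. Z \<omega> \<in> B}
    \<le> prob (\<Union>z \<in> B \<inter> {z. 0 < prob {\<omega> \<in> space M. Z \<omega> = z}}. {\<omega> \<in> space M. Z \<omega> = z})"
proof (rule finite_measure_mono_AE)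
  have atom_sets: "{\<omega> \<in> space M. Z \<omega> = z} \<in> sets M" for z
    using measurable_sets[OF Z borel_closed[OF closed_singleton]]
    by (simp add: vimage_def Int_def conj_commute)
  show "(\<Union>z \<in> B \<inter> {z. 0 < prob {\<omega> \<in> space M. Z \<omega> = z}}. {\<omega> \<in> space M. Z \<omega> = z}) \<in> sets M"
    using countable_pos_prob_values[OF Z] atom_sets
    by (intro sets.countable_UN'') (auto elim: countable_subset[rotated])
  have "AE \<omega> in M. \<forall>z\<in>S. prob {\<omega>' \<in> space M. Z \<omega>' = z} = 0 \<longrightarrow> Z \<omega> \<noteq> z"
  proof (rule AE_ball_countable'[OF _ \<open>countable S\<close>])
    show "AE \<omega> in M. prob {\<omega>' \<in> space M. Z \<omega>' = z} = 0 \<longrightarrow> Z \<omega> \<noteq> z" for z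
      using atom_sets[of z] by (cases "prob {\<omega>' \<in> space M. Z \<omega>' = z} = 0")
        (auto intro!: AE_I'[of "{\<omega>' \<in> space M. Z \<omega>' = z}"] simp: null_sets_def emeasure_eq_measure)
  qed
  then show "AE \<omega> in M. \<omega> \<in> {\<omega> \<in> space M. Z \<omega> \<in> B}
      \<longrightarrow> \<omega> \<in> (\<Union>z \<in> B \<inter> {z. 0 < prob {\<omega> \<in> space M. Z \<omega> = z}}. {\<omega> \<in> space M. Z \<omega> = z})"
    using \<open>AE \<omega> in M. Z \<omega> \<in> S\<close> by eventually_elim (auto simp: zero_less_measure_iff)
qed

theorem lemma3p3:
  fixes M :: "'a measure" and A :: "'a set" and X Y :: "'a \<Rightarrow> real" and \<delta> :: real
  assumes "prob_space M"
    and "A \<in> sets M"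
    and "X \<in> borel_measurable M" and "Y \<in> borel_measurable M"
    and "discrete_rv M X" and "discrete_rv M Y"
    and "self_calibrated M A X" and "self_calibrated M A Y"
    and "0 < \<delta>" and "\<delta> < 1/2"
    and "\<And>x y x' y'.
           measure M {\<omega> \<in> space M. X \<omega> = x \<and> Y \<omega> = y} > 0 \<Longrightarrow> \<bar>y - x\<bar> \<ge> 1 - \<delta> \<Longrightarrow>
           measure M {\<omega> \<in> space M. X \<omega> = x' \<and> Y \<omega> = y'} > 0 \<Longrightarrow> \<bar>y' - x'\<bar> \<ge> 1 - \<delta> \<Longrightarrow>
           (x' = x \<or> y' = y) \<Longrightarrow> (x', y') = (x, y)"
  shows "measure M {\<omega> \<in> space M. \<bar>Y \<omega> - X \<omega>\<bar> \<ge> 1 - \<delta>} \<le> 2 * \<delta> / (1 + \<delta>)"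
proof -
  interpret prob_space M by fact
  note [measurable] = assms(2-4)
  define K where "K = {(x, y). 0 < prob {\<omega> \<in> space M. X \<omega> = x \<and> Y \<omega> = y} \<and> 1 - \<delta> \<le> \<bar>y - x\<bar>}"
  define E where "E = (\<Union>(x, y)\<in>K. {\<omega> \<in> space M. X \<omega> = x \<and> Y \<omega> = y})"
  have XY: "(\<lambda>\<omega>. (X \<omega>, Y \<omega>)) \<in> borel_measurable M"
    by measurable
  have "(x', y') = (x, y)" if "(x, y) \<in> K" "(x', y') \<in> K" "x' = x \<or> y' = y" for x y x' y'
    using that by (intro assms(11)) (auto simp: K_def)
  then have "inj_on fst K" "inj_on snd K"
    unfolding inj_on_def by fastforce+
  moreover have "countable K"
    using countable_pos_prob_values[OF XY] by (rule countable_subset[rotated]) (auto simp: K_def)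
  ultimately have "(1 - \<delta>) * prob E \<le> 2 * \<delta> * (1 - prob E)"
    unfolding E_def using assms(9,10)
    by (intro prob_UN_matched_atoms_le calibrated_atom_bound_abs[OF assms(2-4,7,8)]) (auto simp: K_def)
  then have "prob E \<le> 2 * \<delta> / (1 + \<delta>)"
    using assms(9) by (simp add: field_simps)
  moreover obtain SX SY where "countable SX" "AE \<omega> in M. X \<omega> \<in> SX" "countable SY" "AE \<omega> in M. Y \<omega> \<in> SY"
    using assms(5,6) unfolding discrete_rv_def by blast
  then have "prob {\<omega> \<in> space M. 1 - \<delta> \<le> \<bar>Y \<omega> - X \<omega>\<bar>} \<le> prob E"
    using prob_le_prob_UN_pos_atoms[OF XY, of "SX \<times> SY" "{(x, y). 1 - \<delta> \<le> \<bar>y - x\<bar>}"]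
    by (simp add: E_def K_def Int_def split_def prod_eq_iff conj_commute)
  ultimately show ?thesis
    by linarith
qed

end
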